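(* Let $x_s<x_t$ be integers, let $C\ge 0$, and let $f:[x_s,x_t]\to\mathbb{R}$ be such that $([x_s,x_t],f)$ is an Ameso($C$) pair. Suppose there exist $x^0\in[x_s,x_t]$ and a positive integer $b$ with $[x^0,x^0+b]\subseteq[x_s,x_t]$ such that (a) $f(x^0)=\min_{y\in[x^0,x^0+b]}f(y)$ and (b) $f(x^0)+C\le\max_{y\in[x^0,x^0+b]}f(y)$. Let $z$ be the largest element of $[x^0,x^0+b]$ at which $f$ attains $\max_{y\in[x^0,x^0+b]}f(y)$. Then $x^0+\frac b2<z\le x^0+b$.
   Context: For integers $a\le b$, $[a,b]$ denotes the set of integers $\{a,a+1,\dots,b\}$. Floors and ceilings of vectors are taken componentwise. A set $D^n\subseteq\mathbb{Z}^n$ is an Ameso set if $\lceil(\vec x+\vec y)/2\rceil,\lfloor(\vec x+\vec y)/2\rfloor\in D^n$ for all $\vec x,\vec y\in D^n$. For $C\ge 0$, $(D^n,f)$ is an Ameso($C$) pair if $D^n$ is an Ameso set, $f:D^n\to\mathbb{R}$ is bounded below, and $f(\vec x)+f(\vec y)+C\ge f(\lceil(\vec x+\vec y)/2\rceil)+f(\lfloor(\vec x+\vec y)/2\rfloor)$ for all $\vec x,\vec y\in D^n$. *)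

theory Defs
  imports "HOL-Analysis.Analysis"
begin

definition ameso_set :: "int set \<Rightarrow> bool" where
  "ameso_set D \<longleftrightarrow> (\<forall>x\<in>D. \<forall>y\<in>D.
      \<lceil>real_of_int (x + y) / 2\<rceil> \<in> D \<and> \<lfloor>real_of_int (x + y) / 2\<rfloor> \<in> D)"

definition ameso_pair :: "real \<Rightarrow> int set \<Rightarrow> (int \<Rightarrow> real) \<Rightarrow> bool" where
  "ameso_pair C D f \<longleftrightarrow> ameso_set D \<and> bdd_below (f ` D) \<and>
     (\<forall>x\<in>D. \<forall>y\<in>D. f x + f y + C \<ge>
        f \<lceil>real_of_int (x + y) / 2\<rceil> + f \<lfloor>real_of_int (x + y) / 2\<rfloor>)"

end

theory Submission
  imports Defs
begin

text \<open>Let \<open>M\<close> be the maximum of \<open>f\<close> on \<open>[x0, x0+b]\<close> and suppose its last maximiser \<open>z\<close>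
  lies in the left half. Reflecting \<open>x0\<close> at \<open>z\<close> gives \<open>y = 2z - x0\<close> in the interval, and the
  Ameso inequality at \<open>x0, y\<close> (whose midpoint is exactly \<open>z\<close>) yields
  \<open>f y \<ge> 2M - C - f x0 \<ge> M\<close>, so \<open>y\<close> is a maximiser to the right of \<open>z\<close> unless \<open>y = z = x0\<close>.
  In that remaining case \<open>f x0\<close> is both minimum and maximum, so \<open>x0 + b\<close> is a later maximiser.\<close>

lemma Greatest_in_finite:
  fixes A :: "'a::linorder set"
  assumes "finite A" and "a \<in> A" and "P a"
  shows "(GREATEST y. y \<in> A \<and> P y) \<in> A \<and> P (GREATEST y. y \<in> A \<and> P y)"
    and "y \<in> A \<Longrightarrow> P y \<Longrightarrow> y \<le> (GREATEST y. y \<in> A \<and> P y)"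
proof -
  let ?S = "{y \<in> A. P y}"
  have "finite ?S" "?S \<noteq> {}" using assms by auto
  then have "Max ?S \<in> ?S" by (rule Max_in)
  moreover have "(GREATEST y. y \<in> A \<and> P y) = Max ?S"
    using calculation \<open>finite ?S\<close> by (intro Greatest_equality) auto
  ultimately show "(GREATEST y. y \<in> A \<and> P y) \<in> A \<and> P (GREATEST y. y \<in> A \<and> P y)"
    and "y \<in> A \<Longrightarrow> P y \<Longrightarrow> y \<le> (GREATEST y. y \<in> A \<and> P y)"
    using \<open>finite ?S\<close> by auto
qed

lemma ameso_pair_midpoint_le:
  assumes "ameso_pair C D f" and "x \<in> D" and "y \<in> D" and "x + y = 2 * z"
  shows "2 * f z \<le> f x + f y + C"
proof -
  have "real_of_int (x + y) / 2 = real_of_int z"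
    using assms(4) by simp
  then show ?thesis
    using assms(1-3) unfolding ameso_pair_def by fastforce
qed

lemma ameso_pair_reflect_ge:
  assumes "ameso_pair C D f" and "x \<in> D" and "y \<in> D" and "x + y = 2 * z"
    and "f x + C \<le> f z"
  shows "f z \<le> f y"
  using ameso_pair_midpoint_le[OF assms(1-4)] assms(5) by linarith

theorem lemma2:
  fixes xs xt x0 b z :: int and C :: real and f :: "int \<Rightarrow> real"
  assumes "xs < xt"
    and "C \<ge> 0"
    and "ameso_pair C {xs..xt} f"
    and "x0 \<in> {xs..xt}"
    and "b > 0"
    and "{x0..x0+b} \<subseteq> {xs..xt}"
    and "f x0 = Min (f ` {x0..x0+b})"
    and "f x0 + C \<le> Max (f ` {x0..x0+b})"
    and "z = (GREATEST y. y \<in> {x0..x0+b} \<and> f y = Max (f ` {x0..x0+b}))"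
  shows "real_of_int x0 + real_of_int b / 2 < real_of_int z \<and> z \<le> x0 + b"
proof -
  define I where "I = {x0..x0+b}"
  define M where "M = Max (f ` I)"
  have ends: "x0 \<in> I" "x0 + b \<in> I" using assms(5) by (auto simp: I_def)
  have le_max: "f y \<le> M" and min_x0: "f x0 \<le> f y" if "y \<in> I" for y
    using that assms(7) by (auto simp: M_def I_def)
  have "M \<in> f ` I"
    unfolding M_def using ends by (intro Max_in) (auto simp: I_def)
  then obtain m where "m \<in> I" "f m = M" by auto
  have z: "z \<in> I" "f z = M" and after_z: "\<And>y. y \<in> I \<Longrightarrow> f y = M \<Longrightarrow> y \<le> z"
    using Greatest_in_finite[of I m "\<lambda>y. f y = M"] \<open>m \<in> I\<close> \<open>f m = M\<close> assms(9)
    by (auto simp: I_def M_def)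
  have "2 * x0 + b < 2 * z"
  proof (rule ccontr)
    assume left_half: "\<not> 2 * x0 + b < 2 * z"
    obtain y where "y \<in> I" "z < y" "M \<le> f y"
    proof (cases "z = x0")
      case True
      then show ?thesis using that ends min_x0 z assms(5) by force
    next
      case False
      have "2 * z - x0 \<in> I" "z < 2 * z - x0" using left_half z(1) False by (auto simp: I_def)
      moreover have "M \<le> f (2 * z - x0)"
        using ameso_pair_reflect_ge[OF assms(3), of x0 "2 * z - x0" z] assms(4,6,8) calculation(1) z(2)
        by (auto simp: I_def M_def)
      ultimately show ?thesis using that by blast
    qed
    then show False using le_max after_z by force
  qed
  then show ?thesis using z(1) by (simp add: I_def)
qed

end
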